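(* In the setting below, let $\mu$ be a $\sigma$-invariant Borel probability measure on $X$. If $\mu(A_i)=1$ for some $1\le i\le r$, then $(X,\sigma,G,\mu)$ is measure conjugate to $(\overleftarrow{G},\phi,G,\nu)$, where $\overleftarrow{G}$ is the $G$-odometer associated to $(\Gamma_n)_{n\ge1}$, $\phi$ is its action by left multiplication and $\nu$ is its unique invariant (Haar) probability measure.
   Context: Setting: $G$ is a countable residually finite group, $r>1$; $(\Gamma_i)_{i\ge1}$ is a strictly decreasing sequence of finite index normal subgroups of $G$ with $\bigcap_i\Gamma_i=\{1_G\}$, $\Gamma_0=G$; $(D_i)_{i\ge0}$ are finite subsets with $D_0=\{1_G\}$, $D_i$ containing exactly one element of each coset of $\Gamma_i$, $1_G\in D_i\subseteq D_{i+1}$, $G=\bigcup_iD_i$, $D_j=\bigcup_{v\in D_j\cap\Gamma_i}vD_i$ for $j>i\ge1$, and $[G:\Gamma_i],[\Gamma_i:\Gamma_{i+1}]\ge3$. $\Sigma=\{1,\dots,r\}$, $\alpha_m\in\Sigma$ with $\alpha_m\equiv m\pmod r$. $J(0)=\{1_G\}$, $J(m)=D_m\setminus\bigcup_{i<m}J(i)\Gamma_{i+1}$; $\eta(hg)=\alpha_{m+1}$ for $h\in J(m)$, $g\in\Gamma_{m+1}$; $X=\overline{\{\sigma^g\eta\}}$ with $\sigma^gx(h)=x(g^{-1}h)$. $\mathrm{Per}(x,\Gamma,\alpha)=\{g:x(\gamma g)=\alpha\ \forall\gamma\in\Gamma\}$. For $n\ge1$: $C_n=\{x\in X:\mathrm{Per}(x,\Gamma_n,\alpha)=\mathrm{Per}(\eta,\Gamma_n,\alpha)\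 \forall\alpha\}$, $C_{n,i}=\{x\in C_n:x(g)=i\ \forall g\in J(n)\}$. For $1\le i\le r$, $k\ge0$: $Z_{i,k}=\bigcup_{v\in D_{i+kr}}\sigma^{v^{-1}}C_{i+kr,i}$, and $A_i=\bigcap_{g\in G}\bigcup_{k\ge0}\bigcap_{l\ge k}\sigma^g(Z_{i,l})$. The $G$-odometer is $\{(x_n)\in\prod_nG/\Gamma_n: x_{n+1}\mapsto x_n$ under canonical projections$\}$. Measure conjugacy: a bimeasurable bijection between invariant conull subsets intertwining the actions and pushing one measure to the other. *)

theory Defs
  imports "HOL-Probability.Probability"
begin

text \<open>The group G is a countable type with a (not necessarily commutative) group
structure written additively: 0 is the identity, + the group law, - the inverse.\<close>

definition lcoset :: "'g::group_add \<Rightarrow> 'g set \<Rightarrow> 'g set" where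
  "lcoset g H = (\<lambda>h. g + h) ` H"

definition setprod :: "'g::group_add set \<Rightarrow> 'g set \<Rightarrow> 'g set" where
  "setprod A B = {a + b | a b. a \<in> A \<and> b \<in> B}"

definition is_subgroup :: "'g::group_add set \<Rightarrow> bool" where
  "is_subgroup H \<longleftrightarrow> 0 \<in> H \<and> (\<forall>a\<in>H. \<forall>b\<in>H. a + b \<in> H) \<and> (\<forall>a\<in>H. - a \<in> H)"

definition is_normal :: "'g::group_add set \<Rightarrow> bool" where
  "is_normal H \<longleftrightarrow> is_subgroup H \<and> (\<forall>g. \<forall>h\<in>H. g + h + - g \<in> H)"

definition quot :: "'g::group_add set \<Rightarrow> 'g set set" where
  "quot H = {lcoset g H | g. True}"

definition rel_quot :: "'g::group_add set \<Rightarrow> 'g set \<Rightarrow> 'g set set" where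
  "rel_quot K H = {lcoset k H | k. k \<in> K}"

definition toeplitz_setting :: "nat \<Rightarrow> (nat \<Rightarrow> 'g::{group_add,countable} set) \<Rightarrow> (nat \<Rightarrow> 'g set) \<Rightarrow> bool" where
  "toeplitz_setting r \<Gamma> D \<longleftrightarrow>
     r > 1 \<and>
     \<Gamma> 0 = UNIV \<and>
     (\<forall>i\<ge>1. is_normal (\<Gamma> i) \<and> finite (quot (\<Gamma> i))) \<and>
     (\<forall>i. \<Gamma> (Suc i) \<subset> \<Gamma> i) \<and>
     (\<Inter>i. \<Gamma> i) = {0} \<and>
     D 0 = {0} \<and>
     (\<forall>i. finite (D i)) \<and>
     (\<forall>i. \<forall>c\<in>quot (\<Gamma> i). \<exists>!d. d \<in> D i \<and> d \<in> c) \<and>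
     (\<forall>i. D i \<subseteq> \<Union>(quot (\<Gamma> i))) \<and>
     (\<forall>i. 0 \<in> D i \<and> D i \<subseteq> D (Suc i)) \<and>
     (\<Union>i. D i) = UNIV \<and>
     (\<forall>i j. 1 \<le> i \<and> i < j \<longrightarrow> D j = (\<Union>v\<in>D j \<inter> \<Gamma> i. lcoset v (D i))) \<and>
     (\<forall>i\<ge>1. card (quot (\<Gamma> i)) \<ge> 3) \<and>
     (\<forall>i\<ge>1. card (rel_quot (\<Gamma> i) (\<Gamma> (Suc i))) \<ge> 3)"

definition alpha :: "nat \<Rightarrow> nat \<Rightarrow> nat" where
  "alpha r m = (if m mod r = 0 then r else m mod r)"

text \<open>Ucum m = \<Union>_{i<m} J(i) \<Gamma>_{i+1}; J(0) = {1_G}, J(m) = D_m \ Ucum m.\<close>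
primrec Ucum :: "(nat \<Rightarrow> 'g::group_add set) \<Rightarrow> (nat \<Rightarrow> 'g set) \<Rightarrow> nat \<Rightarrow> 'g set" where
  "Ucum \<Gamma> D 0 = {}"
| "Ucum \<Gamma> D (Suc m) = Ucum \<Gamma> D m \<union>
     setprod (if m = 0 then {0} else D m - Ucum \<Gamma> D m) (\<Gamma> (Suc m))"

definition J :: "(nat \<Rightarrow> 'g::group_add set) \<Rightarrow> (nat \<Rightarrow> 'g set) \<Rightarrow> nat \<Rightarrow> 'g set" where
  "J \<Gamma> D m = (if m = 0 then {0} else D m - Ucum \<Gamma> D m)"

text \<open>\<eta>(hg) = \<alpha>_{m+1} for h \<in> J(m), g \<in> \<Gamma>_{m+1}.\<close>
definition eta :: "nat \<Rightarrow> (nat \<Rightarrow> 'g::group_add set) \<Rightarrow> (nat \<Rightarrow> 'g set) \<Rightarrow> 'g \<Rightarrow> nat" where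
  "eta r \<Gamma> D h = alpha r (Suc (LEAST m. h \<in> setprod (J \<Gamma> D m) (\<Gamma> (Suc m))))"

definition shift :: "'g::group_add \<Rightarrow> ('g \<Rightarrow> 'a) \<Rightarrow> ('g \<Rightarrow> 'a)" where
  "shift g x = (\<lambda>h. x (- g + h))"

definition Xsh :: "nat \<Rightarrow> (nat \<Rightarrow> 'g::{group_add,countable} set) \<Rightarrow> (nat \<Rightarrow> 'g set) \<Rightarrow> ('g \<Rightarrow> nat) set" where
  "Xsh r \<Gamma> D = closure (range (\<lambda>g. shift g (eta r \<Gamma> D)))"

definition Per :: "('g::group_add \<Rightarrow> nat) \<Rightarrow> 'g set \<Rightarrow> nat \<Rightarrow> 'g set" where
  "Per x H a = {g. \<forall>\<gamma>\<in>H. x (\<gamma> + g) = a}"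

definition Cn :: "nat \<Rightarrow> (nat \<Rightarrow> 'g::{group_add,countable} set) \<Rightarrow> (nat \<Rightarrow> 'g set) \<Rightarrow> nat \<Rightarrow> ('g \<Rightarrow> nat) set" where
  "Cn r \<Gamma> D n = {x \<in> Xsh r \<Gamma> D. \<forall>a\<in>{1..r}. Per x (\<Gamma> n) a = Per (eta r \<Gamma> D) (\<Gamma> n) a}"

definition Cni :: "nat \<Rightarrow> (nat \<Rightarrow> 'g::{group_add,countable} set) \<Rightarrow> (nat \<Rightarrow> 'g set) \<Rightarrow> nat \<Rightarrow> nat \<Rightarrow> ('g \<Rightarrow> nat) set" where
  "Cni r \<Gamma> D n i = {x \<in> Cn r \<Gamma> D n. \<forall>g\<in>J \<Gamma> D n. x g = i}"

definition Z :: "nat \<Rightarrow> (nat \<Rightarrow> 'g::{group_add,countable} set) \<Rightarrow> (nat \<Rightarrow> 'g set) \<Rightarrow> nat \<Rightarrow> nat \<Rightarrow> ('g \<Rightarrow> nat) set" where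
  "Z r \<Gamma> D i k = (\<Union>v\<in>D (i + k * r). shift (- v) ` Cni r \<Gamma> D (i + k * r) i)"

definition A :: "nat \<Rightarrow> (nat \<Rightarrow> 'g::{group_add,countable} set) \<Rightarrow> (nat \<Rightarrow> 'g set) \<Rightarrow> nat \<Rightarrow> ('g \<Rightarrow> nat) set" where
  "A r \<Gamma> D i = (\<Inter>g. \<Union>k. \<Inter>l\<in>{k..}. shift g ` Z r \<Gamma> D i l)"

text \<open>The G-odometer: compatible sequences of cosets (x_n \<in> G/\<Gamma>_n, x_{n+1} \<subseteq> x_n),
with the product of the discrete \<sigma>-algebras (= Borel \<sigma>-algebra of the product topology),
and action by left multiplication.\<close>
definition odometer :: "(nat \<Rightarrow> 'g::group_add set) \<Rightarrow> (nat \<Rightarrow> 'g set) set" where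
  "odometer \<Gamma> = {x. (\<forall>n. x n \<in> quot (\<Gamma> n)) \<and> (\<forall>n. x (Suc n) \<subseteq> x n)}"

definition odometer_space :: "(nat \<Rightarrow> 'g::group_add set) \<Rightarrow> (nat \<Rightarrow> 'g set) measure" where
  "odometer_space \<Gamma> = restrict_space (PiM UNIV (\<lambda>n. count_space (quot (\<Gamma> n)))) (odometer \<Gamma>)"

definition odo_act :: "'g::group_add \<Rightarrow> (nat \<Rightarrow> 'g set) \<Rightarrow> (nat \<Rightarrow> 'g set)" where
  "odo_act g x = (\<lambda>n. lcoset g (x n))"

definition invariant_prob :: "('g \<Rightarrow> 'a \<Rightarrow> 'a) \<Rightarrow> 'a measure \<Rightarrow> bool" where
  "invariant_prob T M \<longleftrightarrow> prob_space M \<and>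
     (\<forall>g. T g \<in> measurable M M \<and> (\<forall>B\<in>sets M. emeasure M (T g -` B \<inter> space M) = emeasure M B))"

definition meas_conj :: "('g \<Rightarrow> 'a \<Rightarrow> 'a) \<Rightarrow> 'a measure \<Rightarrow> ('g \<Rightarrow> 'b \<Rightarrow> 'b) \<Rightarrow> 'b measure \<Rightarrow> bool" where
  "meas_conj T M S N \<longleftrightarrow> (\<exists>X0 Y0 f.
     X0 \<in> sets M \<and> Y0 \<in> sets N \<and>
     emeasure M (space M - X0) = 0 \<and> emeasure N (space N - Y0) = 0 \<and>
     (\<forall>g. \<forall>x\<in>X0. T g x \<in> X0) \<and> (\<forall>g. \<forall>y\<in>Y0. S g y \<in> Y0) \<and>
     bij_betw f X0 Y0 \<and>
     f \<in> measurable (restrict_space M X0) (restrict_space N Y0) \<and>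
     the_inv_into X0 f \<in> measurable (restrict_space N Y0) (restrict_space M X0) \<and>
     (\<forall>g. \<forall>x\<in>X0. f (T g x) = S g (f x)) \<and>
     (\<forall>B\<in>sets N. B \<subseteq> Y0 \<longrightarrow> emeasure N B = emeasure M (f -` B \<inter> X0)))"

end

theory Submission
  imports Defs
begin

text \<open>
  For \<open>x \<in> A\<^sub>i\<close> and every level \<open>n\<close> some translate \<open>\<sigma>\<^sup>v x\<close> has the same \<open>\<Gamma>\<^sub>n\<close>-periodic
  parts as \<open>\<eta>\<close>. The translations of \<open>G\<close> preserving all periodic parts of \<open>\<eta>\<close> at level \<open>n\<close> are
  exactly the elements of \<open>\<Gamma>\<^sub>n\<close>, so the coset \<open>v\<^sup>-\<^sup>1\<Gamma>\<^sub>n\<close> is determined by \<open>x\<close>, and these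
  cosets define an equivariant map \<open>\<pi>\<close> from \<open>A\<^sub>i\<close> to the odometer. Along the levels \<open>i + l r\<close>
  the symbol \<open>x(h)\<close> is eventually a function of the coset \<open>\<pi>(x)\<^sub>i\<^sub>+\<^sub>l\<^sub>r\<close>, so \<open>\<pi>\<close> has a
  measurable left inverse and is a measurable isomorphism onto its image. The image of \<open>\<mu>\<close> is an
  invariant probability on the odometer, and it is the only one, because invariance gives all
  cylinders of one level the same measure.
\<close>

declare add_uminus_conv_diff [simp del]

section \<open>Cosets and periodic parts\<close>

lemma mem_lcoset_iff: "x \<in> lcoset g H \<longleftrightarrow> - g + x \<in> H"
  unfolding lcoset_def by (force simp: add.assoc[symmetric])

lemma lcoset_lcoset [simp]: "lcoset a (lcoset b S) = lcoset (a + b) S"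
  unfolding lcoset_def image_image by (simp add: add.assoc)

lemma lcoset_zero [simp]: "lcoset 0 S = S"
  unfolding lcoset_def by simp

lemma lcoset_UNIV [simp]: "lcoset g UNIV = UNIV"
  by (auto simp: mem_lcoset_iff)

lemma lcoset_mono: "S \<subseteq> T \<Longrightarrow> lcoset g S \<subseteq> lcoset g T"
  unfolding lcoset_def by auto

lemma lcoset_cancel_left [simp]: "lcoset g S = lcoset g T \<longleftrightarrow> S = T"
  by (metis lcoset_lcoset lcoset_zero neg_eq_iff_add_eq_0)

lemma lcoset_in_quot [simp]: "lcoset g H \<in> quot H"
  unfolding quot_def by auto

lemma mem_setprod_iff: "x \<in> setprod S T \<longleftrightarrow> (\<exists>a\<in>S. \<exists>b\<in>T. x = a + b)"
  unfolding setprod_def by auto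

lemma shift_shift [simp]: "shift a (shift b x) = shift (a + b) x"
  unfolding shift_def by (simp add: minus_add add.assoc)

lemma shift_zero [simp]: "shift 0 x = x"
  unfolding shift_def by simp

lemma mem_shift_image_iff: "x \<in> shift g ` S \<longleftrightarrow> shift (- g) x \<in> S"
proof
  assume "x \<in> shift g ` S"
  then obtain z where "z \<in> S" "x = shift g z" by blast
  then show "shift (- g) x \<in> S" by simp
next
  assume "shift (- g) x \<in> S"
  then have "shift g (shift (- g) x) \<in> shift g ` S" by (rule imageI)
  then show "x \<in> shift g ` S" by simp
qed

lemma subgroup_add_mem: "is_subgroup H \<Longrightarrow> a \<in> H \<Longrightarrow> b \<in> H \<Longrightarrow> a + b \<in> H"
  and subgroup_minus_mem: "is_subgroup H \<Longrightarrow> a \<in> H \<Longrightarrow> - a \<in> H"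
  and subgroup_zero_mem: "is_subgroup H \<Longrightarrow> 0 \<in> H"
  unfolding is_subgroup_def by auto

lemma mem_lcoset_self: "is_subgroup H \<Longrightarrow> g \<in> lcoset g H"
  by (simp add: mem_lcoset_iff subgroup_zero_mem)

lemma lcoset_eq_iff:
  assumes "is_subgroup H"
  shows "lcoset a H = lcoset b H \<longleftrightarrow> - a + b \<in> H"
proof
  assume "lcoset a H = lcoset b H"
  with mem_lcoset_self[OF assms, of b] have "b \<in> lcoset a H" by simp
  then show "- a + b \<in> H" by (simp add: mem_lcoset_iff)
next
  assume ab: "- a + b \<in> H"
  have "- a + x \<in> H \<longleftrightarrow> - b + x \<in> H" for x
  proof
    assume "- a + x \<in> H"
    with ab have "- (- a + b) + (- a + x) \<in> H"
      using assms subgroup_add_mem subgroup_minus_mem by blast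
    then show "- b + x \<in> H" by (simp add: minus_add add.assoc)
  next
    assume "- b + x \<in> H"
    with ab have "(- a + b) + (- b + x) \<in> H" using assms subgroup_add_mem by blast
    then show "- a + x \<in> H" by (simp add: add.assoc)
  qed
  then show "lcoset a H = lcoset b H" by (auto simp: mem_lcoset_iff)
qed

lemma quot_disjoint:
  assumes "is_subgroup H" "S \<in> quot H" "T \<in> quot H" "x \<in> S" "x \<in> T"
  shows "S = T"
proof -
  obtain a b where S: "S = lcoset a H" and T: "T = lcoset b H"
    using assms(2,3) unfolding quot_def by auto
  have "lcoset a H = lcoset x H" "lcoset b H = lcoset x H"
    using assms(4,5) by (simp_all add: S T lcoset_eq_iff[OF assms(1)] mem_lcoset_iff)
  then show ?thesis by (simp add: S T)
qed

lemma quot_nonempty: "is_subgroup H \<Longrightarrow> S \<in> quot H \<Longrightarrow> S \<noteq> {}"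
  unfolding quot_def using mem_lcoset_self by fastforce

lemma Per_shift:
  assumes "is_normal H"
  shows "Per (shift g x) H a = lcoset g (Per x H a)"
proof -
  have conj: "h \<in> H \<Longrightarrow> c + h + - c \<in> H" for c h
    using assms unfolding is_normal_def by blast
  have "k \<in> Per (shift g x) H a \<longleftrightarrow> - g + k \<in> Per x H a" for k
  proof
    assume k: "k \<in> Per (shift g x) H a"
    have "x (\<gamma> + (- g + k)) = a" if "\<gamma> \<in> H" for \<gamma>
    proof -
      from k conj[OF that, of g] have "x (- g + ((g + \<gamma> + - g) + k)) = a"
        unfolding Per_def shift_def by blast
      then show ?thesis by (simp add: add.assoc)
    qed
    then show "- g + k \<in> Per x H a" unfolding Per_def by blast
  next
    assume k: "- g + k \<in> Per x H a"
    have "x (- g + (\<gamma> + k)) = a" if "\<gamma> \<in> H" for \<gamma>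
    proof -
      from k conj[OF that, of "- g"] have "x ((- g + \<gamma> + - (- g)) + (- g + k)) = a"
        unfolding Per_def by blast
      then show ?thesis by (simp add: add.assoc)
    qed
    then show "k \<in> Per (shift g x) H a" unfolding Per_def shift_def by blast
  qed
  then show ?thesis unfolding mem_lcoset_iff set_eq_iff by blast
qed

lemma lcoset_Per:
  assumes "is_subgroup H" "\<gamma> \<in> H"
  shows "lcoset \<gamma> (Per x H a) = Per x H a"
proof -
  have "- \<gamma> + k \<in> Per x H a \<longleftrightarrow> k \<in> Per x H a" for k
  proof
    assume k: "- \<gamma> + k \<in> Per x H a"
    have "x (\<delta> + k) = a" if "\<delta> \<in> H" for \<delta>
    proof -
      have "\<delta> + \<gamma> \<in> H" using assms that subgroup_add_mem by blast
      with k have "x ((\<delta> + \<gamma>) + (- \<gamma> + k)) = a" unfolding Per_def by blast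
      then show ?thesis by (simp add: add.assoc)
    qed
    then show "k \<in> Per x H a" unfolding Per_def by blast
  next
    assume k: "k \<in> Per x H a"
    have "x (\<delta> + (- \<gamma> + k)) = a" if "\<delta> \<in> H" for \<delta>
    proof -
      have "\<delta> + - \<gamma> \<in> H" using assms that subgroup_add_mem subgroup_minus_mem by blast
      with k show ?thesis unfolding Per_def by (simp add: add.assoc[symmetric])
    qed
    then show "- \<gamma> + k \<in> Per x H a" unfolding Per_def by blast
  qed
  then show ?thesis unfolding mem_lcoset_iff set_eq_iff by blast
qed

lemma Per_eq_subgroup_mono:
  assumes "is_subgroup H" "is_subgroup K" "K \<subseteq> H" "Per x K a = Per y K a"
  shows "Per x H a = Per y H a"
proof -
  have "Per z H a = {g. \<forall>\<gamma>\<in>H. \<gamma> + g \<in> Per z K a}" for z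
  proof -
    have "\<delta> + \<gamma> \<in> H" if "\<gamma> \<in> H" "\<delta> \<in> K" for \<gamma> \<delta>
      using that assms(1,3) subgroup_add_mem by blast
    moreover have "0 \<in> K" using assms(2) by (rule subgroup_zero_mem)
    ultimately show ?thesis unfolding Per_def by (fastforce simp: add.assoc[symmetric])
  qed
  with assms(4) show ?thesis by simp
qed

lemma alpha_range: "1 < r \<Longrightarrow> alpha r m \<in> {1..r}"
  unfolding alpha_def by (auto simp: less_imp_le)

lemma alpha_Suc_neq:
  assumes "1 < r"
  shows "alpha r (Suc m) \<noteq> alpha r m"
proof
  assume "alpha r (Suc m) = alpha r m"
  moreover have "alpha r k mod r = k mod r" for k
    unfolding alpha_def by simp
  ultimately have "Suc m mod r = m mod r" by metis
  with assms show False by (auto simp: mod_Suc split: if_splits)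
qed

section \<open>The odometer of a chain of subgroups\<close>

locale subgroup_chain =
  fixes \<Gamma> :: "nat \<Rightarrow> 'g::group_add set"
  assumes subgroup_Gamma: "is_subgroup (\<Gamma> n)"
    and finite_quot_Gamma: "finite (quot (\<Gamma> n))"
    and Gamma_Suc_subset: "\<Gamma> (Suc n) \<subseteq> \<Gamma> n"
    and Gamma_0: "\<Gamma> 0 = UNIV"
begin

lemma Gamma_antimono: "m \<le> n \<Longrightarrow> \<Gamma> n \<subseteq> \<Gamma> m"
  by (rule lift_Suc_antimono_le[of \<Gamma>]) (use Gamma_Suc_subset in auto)

lemma quot_Gamma_0: "quot (\<Gamma> 0) = {UNIV}"
  unfolding quot_def Gamma_0 by simp

lemma odometer_antimono: "y \<in> odometer \<Gamma> \<Longrightarrow> m \<le> n \<Longrightarrow> y n \<subseteq> y m"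
  unfolding odometer_def by (rule lift_Suc_antimono_le[of y]) auto

lemma odometer_subset_PiE: "odometer \<Gamma> \<subseteq> (\<Pi>\<^sub>E n\<in>UNIV. quot (\<Gamma> n))"
  unfolding odometer_def by (auto simp: PiE_iff)

lemma space_odometer_space [simp]: "space (odometer_space \<Gamma>) = odometer \<Gamma>"
  unfolding odometer_space_def using odometer_subset_PiE
  by (auto simp: space_restrict_space space_PiM)

lemma measurable_odometer_coord:
  "(\<lambda>y. y n) \<in> measurable (odometer_space \<Gamma>) (count_space (quot (\<Gamma> n)))"
  unfolding odometer_space_def
  by (rule measurable_restrict_space1, rule measurable_component_singleton) simp

lemma measurable_into_odometer_space:
  assumes "\<And>n. (\<lambda>x. f x n) \<in> measurable M (count_space (quot (\<Gamma> n)))"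
    and "f \<in> space M \<rightarrow> odometer \<Gamma>"
  shows "f \<in> measurable M (odometer_space \<Gamma>)"
  unfolding odometer_space_def
proof (rule measurable_restrict_space2)
  show "f \<in> measurable M (Pi\<^sub>M UNIV (\<lambda>n. count_space (quot (\<Gamma> n))))"
    using assms odometer_subset_PiE by (intro measurable_PiM_single') auto
qed (use assms in auto)

lemma odo_act_in_odometer:
  assumes "y \<in> odometer \<Gamma>"
  shows "odo_act g y \<in> odometer \<Gamma>"
proof -
  have "lcoset g (y n) \<in> quot (\<Gamma> n)" for n
  proof -
    obtain a where "y n = lcoset a (\<Gamma> n)" using assms unfolding odometer_def quot_def by blast
    then show ?thesis by simp
  qed
  moreover have "lcoset g (y (Suc n)) \<subseteq> lcoset g (y n)" for n
    using assms by (intro lcoset_mono) (simp add: odometer_def)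
  ultimately show ?thesis unfolding odometer_def odo_act_def by simp
qed

lemma measurable_odo_act: "odo_act g \<in> measurable (odometer_space \<Gamma>) (odometer_space \<Gamma>)"
proof (rule measurable_into_odometer_space)
  fix n
  have "lcoset g \<in> measurable (count_space (quot (\<Gamma> n))) (count_space (quot (\<Gamma> n)))"
    by (auto simp: quot_def)
  from measurable_compose[OF measurable_odometer_coord this]
  show "(\<lambda>y. odo_act g y n) \<in> measurable (odometer_space \<Gamma>) (count_space (quot (\<Gamma> n)))"
    unfolding odo_act_def .
qed (use odo_act_in_odometer in auto)

definition cylinder :: "nat \<Rightarrow> 'g set \<Rightarrow> (nat \<Rightarrow> 'g set) set" where
  "cylinder n C = {y \<in> odometer \<Gamma>. y n = C}"

definition cylinders :: "(nat \<Rightarrow> 'g set) set set" where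
  "cylinders = insert {} {cylinder n C | n C. C \<in> quot (\<Gamma> n)}"

lemma cylinder_subset:
  assumes "y\<^sub>0 \<in> cylinder n C" "y\<^sub>0 \<in> cylinder m C'" "m \<le> n"
  shows "cylinder n C \<subseteq> cylinder m C'"
proof
  fix y assume y: "y \<in> cylinder n C"
  have "C \<noteq> {}"
    using assms(1) quot_nonempty subgroup_Gamma unfolding cylinder_def odometer_def by blast
  then obtain z where "z \<in> C" by blast
  moreover have "C \<subseteq> y m" "C \<subseteq> C'"
    using odometer_antimono[OF _ assms(3)] y assms(1,2) unfolding cylinder_def by auto
  ultimately have "y m = C'"
    using quot_disjoint[OF subgroup_Gamma] y assms(2) unfolding cylinder_def odometer_def by blast
  with y show "y \<in> cylinder m C'" unfolding cylinder_def by simp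
qed

lemma Int_stable_cylinders: "Int_stable cylinders"
proof (rule Int_stableI)
  fix a b assume a: "a \<in> cylinders" and b: "b \<in> cylinders"
  show "a \<inter> b \<in> cylinders"
  proof (cases "a \<inter> b = {}")
    case False
    then obtain y\<^sub>0 where "y\<^sub>0 \<in> a" "y\<^sub>0 \<in> b" by auto
    moreover obtain n C m C' where "a = cylinder n C" "b = cylinder m C'"
      using a b \<open>y\<^sub>0 \<in> a\<close> \<open>y\<^sub>0 \<in> b\<close> unfolding cylinders_def by auto
    ultimately have "a \<subseteq> b \<or> b \<subseteq> a"
      using cylinder_subset nle_le by metis
    with a b show ?thesis by (metis Int_absorb1 Int_absorb2)
  qed (simp add: cylinders_def)
qed

lemma sets_cylinder: "cylinder n C \<in> sets (odometer_space \<Gamma>)"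
proof (cases "C \<in> quot (\<Gamma> n)")
  case True
  have "cylinder n C = (\<lambda>y. y n) -` {C} \<inter> space (odometer_space \<Gamma>)"
    unfolding cylinder_def by auto
  then show ?thesis using measurable_sets[OF measurable_odometer_coord, of "{C}" n] True by simp
next
  case False
  then have "cylinder n C = {}" unfolding cylinder_def odometer_def by auto
  then show ?thesis by simp
qed

lemma sets_odometer_space_eq: "sets (odometer_space \<Gamma>) = sigma_sets (odometer \<Gamma>) cylinders"
proof
  show "sigma_sets (odometer \<Gamma>) cylinders \<subseteq> sets (odometer_space \<Gamma>)"
    using sets_cylinder sets.top[of "odometer_space \<Gamma>"]
    by (intro sets.sigma_sets_subset') (auto simp: cylinders_def)
next
  let ?M = "\<lambda>n. count_space (quot (\<Gamma> n))"
  let ?\<Omega> = "\<Pi>\<^sub>E n\<in>UNIV. space (?M n)"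
  have "odometer \<Gamma> \<inter> B \<in> sigma_sets (odometer \<Gamma>) cylinders"
    if "B \<in> sigma_sets ?\<Omega> {{f \<in> ?\<Omega>. f n \<in> X} | n X. n \<in> UNIV \<and> X \<in> sets (?M n)}" for B
    using that
  proof induction
    case (Basic a)
    then obtain n X where a: "a = {f \<in> ?\<Omega>. f n \<in> X}" "X \<subseteq> quot (\<Gamma> n)" by auto
    have "odometer \<Gamma> \<inter> a = (\<Union>C\<in>X. cylinder n C)"
      using a odometer_subset_PiE unfolding cylinder_def by auto
    moreover have "countable X"
      using a(2) finite_quot_Gamma countable_finite finite_subset by blast
    moreover have "cylinder n C \<in> sigma_sets (odometer \<Gamma>) cylinders" if "C \<in> X" for C
      using that a(2) unfolding cylinders_def by auto
    ultimately show ?case by (metis sigma_sets_UNION countable_image image_iff)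
  next
    case (Compl a)
    have "odometer \<Gamma> \<inter> (?\<Omega> - a) = odometer \<Gamma> - (odometer \<Gamma> \<inter> a)"
      using odometer_subset_PiE by auto
    with Compl show ?case by (simp add: sigma_sets.Compl)
  next
    case (Union a)
    have "odometer \<Gamma> \<inter> (\<Union>i. a i) = (\<Union>i. odometer \<Gamma> \<inter> a i)" by auto
    then show ?case by (metis Union.IH sigma_sets.Union)
  qed (simp add: sigma_sets.Empty)
  then show "sets (odometer_space \<Gamma>) \<subseteq> sigma_sets (odometer \<Gamma>) cylinders"
    unfolding odometer_space_def sets_restrict_space sets_PiM_single by auto
qed

lemma emeasure_cylinder:
  assumes "sets \<nu> = sets (odometer_space \<Gamma>)" "space \<nu> = odometer \<Gamma>"
    and "invariant_prob odo_act \<nu>" and "C \<in> quot (\<Gamma> n)"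
  shows "of_nat (card (quot (\<Gamma> n))) * emeasure \<nu> (cylinder n C) = 1"
proof -
  have prob: "prob_space \<nu>"
    and inv: "\<And>g B. B \<in> sets \<nu> \<Longrightarrow> emeasure \<nu> (odo_act g -` B \<inter> space \<nu>) = emeasure \<nu> B"
    using assms(3) unfolding invariant_prob_def by blast+
  have same: "emeasure \<nu> (cylinder n C') = emeasure \<nu> (cylinder n C)"
    if C': "C' \<in> quot (\<Gamma> n)" for C'
  proof -
    obtain a where "C = lcoset a (\<Gamma> n)" using assms(4) unfolding quot_def by auto
    moreover obtain b where "C' = lcoset b (\<Gamma> n)" using C' unfolding quot_def by auto
    ultimately have C'_eq: "lcoset (b + - a) C = C'" by (simp add: add.assoc)
    have "odo_act (b + - a) -` cylinder n C' \<inter> space \<nu> = cylinder n C"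
    proof (intro set_eqI iffI)
      fix y assume y: "y \<in> odo_act (b + - a) -` cylinder n C' \<inter> space \<nu>"
      then have "lcoset (b + - a) (y n) = lcoset (b + - a) C"
        unfolding C'_eq cylinder_def odo_act_def by simp
      with y assms(2) show "y \<in> cylinder n C" unfolding cylinder_def by simp
    next
      fix y assume y: "y \<in> cylinder n C"
      then have "odo_act (b + - a) y n = C'"
        unfolding C'_eq[symmetric] cylinder_def odo_act_def by simp
      with y assms(2) odo_act_in_odometer show "y \<in> odo_act (b + - a) -` cylinder n C' \<inter> space \<nu>"
        unfolding cylinder_def by simp
    qed
    with inv[of "cylinder n C'" "b + - a"] show ?thesis
      using assms(1) sets_cylinder by simp
  qed
  have "1 = emeasure \<nu> (space \<nu>)"
    using prob_space.emeasure_space_1[OF prob] by simp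
  also have "space \<nu> = (\<Union>C'\<in>quot (\<Gamma> n). cylinder n C')"
    unfolding assms(2) cylinder_def odometer_def by auto
  also have "emeasure \<nu> \<dots> = (\<Sum>C'\<in>quot (\<Gamma> n). emeasure \<nu> (cylinder n C'))"
    using assms(1) sets_cylinder finite_quot_Gamma
    by (intro sum_emeasure[symmetric]) (auto simp: disjoint_family_on_def cylinder_def)
  also have "\<dots> = of_nat (card (quot (\<Gamma> n))) * emeasure \<nu> (cylinder n C)"
    using same by simp
  finally show ?thesis by simp
qed

lemma invariant_odometer_measure_unique:
  assumes "sets \<nu> = sets (odometer_space \<Gamma>)" "space \<nu> = odometer \<Gamma>" "invariant_prob odo_act \<nu>"
    and "sets \<nu>' = sets (odometer_space \<Gamma>)" "space \<nu>' = odometer \<Gamma>" "invariant_prob odo_act \<nu>'"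
  shows "\<nu> = \<nu>'"
proof (rule measure_eqI_generator_eq[OF Int_stable_cylinders])
  show "cylinders \<subseteq> Pow (odometer \<Gamma>)"
    unfolding cylinders_def cylinder_def by blast
  show "sets \<nu> = sigma_sets (odometer \<Gamma>) cylinders" "sets \<nu>' = sigma_sets (odometer \<Gamma>) cylinders"
    using assms(1,4) sets_odometer_space_eq by simp_all
  show "emeasure \<nu> X = emeasure \<nu>' X" if X: "X \<in> cylinders" for X
  proof (cases "X = {}")
    case False
    then obtain n C where X_eq: "X = cylinder n C" and C: "C \<in> quot (\<Gamma> n)"
      using X unfolding cylinders_def by blast
    define c :: ennreal where "c = of_nat (card (quot (\<Gamma> n)))"
    have "c \<noteq> 0" "c \<noteq> \<top>"
      using C finite_quot_Gamma[of n] unfolding c_def by (auto simp: card_eq_0_iff)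
    moreover have "c * emeasure \<nu> X = c * emeasure \<nu>' X"
      using emeasure_cylinder[OF assms(1-3) C] emeasure_cylinder[OF assms(4-6) C]
      unfolding X_eq c_def by simp
    ultimately show ?thesis by (simp add: ennreal_mult_cancel_left)
  qed simp
  show "range (\<lambda>_. odometer \<Gamma>) \<subseteq> cylinders"
  proof -
    have "odometer \<Gamma> = cylinder 0 UNIV"
      using quot_Gamma_0 unfolding cylinder_def odometer_def by blast
    then show ?thesis using quot_Gamma_0 unfolding cylinders_def by blast
  qed
  have "prob_space \<nu>" using assms(3) unfolding invariant_prob_def by blast
  then show "emeasure \<nu> (odometer \<Gamma>) \<noteq> \<infinity>"
    using prob_space.emeasure_space_1 assms(2) by fastforce
qed simp

end

section \<open>The Toeplitz array \<open>\<eta>\<close>\<close>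

locale toeplitz =
  fixes r :: nat and \<Gamma> :: "nat \<Rightarrow> 'g::{group_add,countable} set" and D :: "nat \<Rightarrow> 'g set"
  assumes setting: "toeplitz_setting r \<Gamma> D"
begin

abbreviation \<eta> :: "'g \<Rightarrow> nat" where
  "\<eta> \<equiv> eta r \<Gamma> D"

lemma r_gt_1: "1 < r"
  using setting unfolding toeplitz_setting_def by (elim conjE)

lemma Gamma_0_UNIV: "\<Gamma> 0 = UNIV"
  using setting unfolding toeplitz_setting_def by (elim conjE)

lemma normal_finite_Gamma: "\<forall>n\<ge>1. is_normal (\<Gamma> n) \<and> finite (quot (\<Gamma> n))"
  using setting unfolding toeplitz_setting_def by (elim conjE)

lemma Gamma_Suc_psubset: "\<forall>n. \<Gamma> (Suc n) \<subset> \<Gamma> n"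
  using setting unfolding toeplitz_setting_def by (elim conjE)

lemma D_unique_in_coset: "\<forall>n. \<forall>c\<in>quot (\<Gamma> n). \<exists>!d. d \<in> D n \<and> d \<in> c"
  using setting unfolding toeplitz_setting_def by (elim conjE)

lemma D_0: "D 0 = {0}"
  using setting unfolding toeplitz_setting_def by (elim conjE)

lemma normal_Gamma: "is_normal (\<Gamma> n)"
  using normal_finite_Gamma Gamma_0_UNIV
  by (cases "n = 0") (auto simp: is_normal_def is_subgroup_def)

sublocale subgroup_chain \<Gamma>
proof
  fix n
  show "is_subgroup (\<Gamma> n)" using normal_Gamma is_normal_def by blast
  show "\<Gamma> (Suc n) \<subseteq> \<Gamma> n" using Gamma_Suc_psubset by auto
  show "\<Gamma> 0 = UNIV" by (rule Gamma_0_UNIV)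
  show "finite (quot (\<Gamma> n))"
  proof (cases "n = 0")
    case True
    then have "quot (\<Gamma> n) = {UNIV}" using Gamma_0_UNIV by (simp add: quot_def)
    then show ?thesis by simp
  qed (use normal_finite_Gamma in simp)
qed

lemma conj_mem_Gamma: "h \<in> \<Gamma> n \<Longrightarrow> g + h + - g \<in> \<Gamma> n"
  using normal_Gamma unfolding is_normal_def by blast

lemmas Gamma_add = subgroup_add_mem[OF subgroup_Gamma]
  and Gamma_minus = subgroup_minus_mem[OF subgroup_Gamma]
  and Gamma_zero = subgroup_zero_mem[OF subgroup_Gamma]

lemma D_representative: "\<exists>d\<in>D n. d \<in> lcoset g (\<Gamma> n)"
  using D_unique_in_coset lcoset_in_quot by blast

lemma D_representative_unique:
  assumes "d \<in> D n" "d' \<in> D n" "- d + d' \<in> \<Gamma> n"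
  shows "d = d'"
proof -
  have "d \<in> lcoset d (\<Gamma> n)" "d' \<in> lcoset d (\<Gamma> n)"
    using assms(3) by (simp_all add: mem_lcoset_iff Gamma_zero)
  with assms(1,2) D_unique_in_coset lcoset_in_quot show ?thesis by blast
qed

lemma Ucum_eq: "Ucum \<Gamma> D n = (\<Union>m<n. setprod (J \<Gamma> D m) (\<Gamma> (Suc m)))"
  by (induction n) (auto simp: J_def lessThan_Suc)

lemma Ucum_add_Gamma:
  assumes "u \<in> Ucum \<Gamma> D n" "\<gamma> \<in> \<Gamma> n"
  shows "u + \<gamma> \<in> Ucum \<Gamma> D n"
proof -
  obtain m j b where m: "m < n" "j \<in> J \<Gamma> D m" "b \<in> \<Gamma> (Suc m)" "u = j + b"
    using assms(1) by (auto simp: Ucum_eq mem_setprod_iff)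
  have "\<Gamma> n \<subseteq> \<Gamma> (Suc m)" using m(1) by (simp add: Gamma_antimono)
  with m(3) assms(2) have "b + \<gamma> \<in> \<Gamma> (Suc m)" by (simp add: subset_iff Gamma_add)
  with m show ?thesis by (auto simp: Ucum_eq mem_setprod_iff add.assoc)
qed

lemma J_disjoint_Ucum: "d \<in> J \<Gamma> D n \<Longrightarrow> d \<notin> Ucum \<Gamma> D n"
  by (cases "n = 0") (auto simp: J_def)

lemma J_subset_D: "J \<Gamma> D n \<subseteq> D n"
  using D_0 by (cases "n = 0") (auto simp: J_def)

lemma mem_J_if: "1 \<le> n \<Longrightarrow> d \<in> D n \<Longrightarrow> d \<notin> Ucum \<Gamma> D n \<Longrightarrow> d \<in> J \<Gamma> D n"
  by (auto simp: J_def)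

lemma eta_J_add:
  assumes "j \<in> J \<Gamma> D m" "\<gamma> \<in> \<Gamma> (Suc m)"
  shows "\<eta> (j + \<gamma>) = alpha r (Suc m)"
proof -
  have "(LEAST m'. j + \<gamma> \<in> setprod (J \<Gamma> D m') (\<Gamma> (Suc m'))) = m"
  proof (rule Least_equality)
    show "j + \<gamma> \<in> setprod (J \<Gamma> D m) (\<Gamma> (Suc m))"
      using assms by (auto simp: mem_setprod_iff)
  next
    fix m' assume m': "j + \<gamma> \<in> setprod (J \<Gamma> D m') (\<Gamma> (Suc m'))"
    show "m \<le> m'"
    proof (rule ccontr)
      assume "\<not> m \<le> m'"
      with m' have "j + \<gamma> \<in> Ucum \<Gamma> D m" unfolding Ucum_eq by auto
      moreover have "- \<gamma> \<in> \<Gamma> m" using assms(2) Gamma_Suc_subset Gamma_minus by (simp add: subset_iff)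
      ultimately have "(j + \<gamma>) + - \<gamma> \<in> Ucum \<Gamma> D m" by (rule Ucum_add_Gamma)
      with J_disjoint_Ucum[OF assms(1)] show False by (simp add: add.assoc)
    qed
  qed
  then show ?thesis unfolding eta_def by simp
qed

lemma eta_J: "j \<in> J \<Gamma> D m \<Longrightarrow> \<eta> j = alpha r (Suc m)"
  using eta_J_add[of j m 0] Gamma_zero by simp

lemma J_add_mem_Per_eta:
  assumes "j \<in> J \<Gamma> D m" "\<gamma> \<in> \<Gamma> (Suc m)" "m < n"
  shows "j + \<gamma> \<in> Per \<eta> (\<Gamma> n) (alpha r (Suc m))"
  unfolding Per_def
proof (intro CollectI ballI)
  fix \<delta> assume "\<delta> \<in> \<Gamma> n"
  moreover have "\<Gamma> n \<subseteq> \<Gamma> (Suc m)" using assms(3) by (simp add: Gamma_antimono)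
  ultimately have "- j + \<delta> + - (- j) \<in> \<Gamma> (Suc m)" by (intro conj_mem_Gamma) blast
  then have "(- j + \<delta> + j) + \<gamma> \<in> \<Gamma> (Suc m)" using Gamma_add assms(2) by simp
  from eta_J_add[OF assms(1) this] show "\<eta> (\<delta> + (j + \<gamma>)) = alpha r (Suc m)"
    by (simp add: add.assoc)
qed

lemma Ucum_subset_Per_eta:
  assumes "u \<in> Ucum \<Gamma> D n"
  shows "u \<in> Per \<eta> (\<Gamma> n) (\<eta> u)" and "\<eta> u \<in> {1..r}"
proof -
  obtain m j b where m: "m < n" "j \<in> J \<Gamma> D m" "b \<in> \<Gamma> (Suc m)" "u = j + b"
    using assms by (auto simp: Ucum_eq mem_setprod_iff)
  then show "u \<in> Per \<eta> (\<Gamma> n) (\<eta> u)" using J_add_mem_Per_eta eta_J_add by simp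
  show "\<eta> u \<in> {1..r}" using m eta_J_add alpha_range r_gt_1 by simp
qed

lemma mem_J_Suc:
  assumes d: "d \<in> J \<Gamma> D k" and \<gamma>: "\<gamma> \<in> \<Gamma> k" "\<gamma> \<notin> \<Gamma> (Suc k)"
    and d': "d' \<in> D (Suc k)" "- (d + \<gamma>) + d' \<in> \<Gamma> (Suc k)"
  shows "d' \<in> J \<Gamma> D (Suc k)"
proof -
  have "\<gamma> + (- (d + \<gamma>) + d') \<in> \<Gamma> k"
    using \<gamma>(1) d'(2) Gamma_Suc_subset Gamma_add by blast
  then have dd': "- d + d' \<in> \<Gamma> k" by (simp add: minus_add add.assoc)
  have "d' \<notin> Ucum \<Gamma> D k"
  proof
    assume "d' \<in> Ucum \<Gamma> D k"
    then have "d' + - (- d + d') \<in> Ucum \<Gamma> D k" using Ucum_add_Gamma Gamma_minus dd' by blast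
    with J_disjoint_Ucum[OF d] show False by (simp add: minus_add add.assoc)
  qed
  moreover have "d' \<notin> setprod (J \<Gamma> D k) (\<Gamma> (Suc k))"
  proof
    assume "d' \<in> setprod (J \<Gamma> D k) (\<Gamma> (Suc k))"
    then obtain j b where jb: "j \<in> J \<Gamma> D k" "b \<in> \<Gamma> (Suc k)" "d' = j + b"
      by (auto simp: mem_setprod_iff)
    have "(- d + d') + - b \<in> \<Gamma> k" using dd' jb(2) Gamma_Suc_subset Gamma_add Gamma_minus by blast
    then have "- d + j \<in> \<Gamma> k" using jb(3) by (simp add: add.assoc)
    with d jb(1) J_subset_D have "d = j" by (meson D_representative_unique subsetD)
    with jb have "(- d + d') + - (- (d + \<gamma>) + d') \<in> \<Gamma> (Suc k)"
      using d'(2) Gamma_add Gamma_minus by (simp add: add.assoc[symmetric])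
    with \<gamma>(2) show False by (simp add: minus_add add.assoc)
  qed
  ultimately show ?thesis using d'(1) by (simp add: J_def)
qed

lemma J_nonempty: "J \<Gamma> D k \<noteq> {}"
proof (induction k)
  case 0
  then show ?case by (simp add: J_def)
next
  case (Suc k)
  then obtain d where "d \<in> J \<Gamma> D k" by blast
  moreover obtain \<gamma> where "\<gamma> \<in> \<Gamma> k" "\<gamma> \<notin> \<Gamma> (Suc k)"
    using Gamma_Suc_psubset by blast
  moreover obtain d' where "d' \<in> D (Suc k)" "- (d + \<gamma>) + d' \<in> \<Gamma> (Suc k)"
    using D_representative by (auto simp: mem_lcoset_iff)
  ultimately show ?case using mem_J_Suc by blast
qed

text \<open>A \<open>g \<in> \<Gamma>\<^sub>k - \<Gamma>\<^sub>k\<^sub>+\<^sub>1\<close> moves a point of \<open>J(k+1)\<close> into \<open>J(k)\<Gamma>\<^sub>k\<^sub>+\<^sub>1\<close>, where \<open>\<eta>\<close> takes the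
  different value \<open>\<alpha>\<^sub>k\<^sub>+\<^sub>1\<close>.\<close>
lemma lcoset_Per_eta_neq:
  assumes g: "g \<in> \<Gamma> k" "g \<notin> \<Gamma> (Suc k)" and "k < n"
  shows "lcoset g (Per \<eta> (\<Gamma> n) (alpha r (Suc k))) \<noteq> Per \<eta> (\<Gamma> n) (alpha r (Suc k))"
proof
  assume inv: "lcoset g (Per \<eta> (\<Gamma> n) (alpha r (Suc k))) = Per \<eta> (\<Gamma> n) (alpha r (Suc k))"
  obtain d where d: "d \<in> J \<Gamma> D k" using J_nonempty by blast
  define \<gamma> where "\<gamma> = - d + g + d"
  have \<gamma>: "\<gamma> \<in> \<Gamma> k" using conj_mem_Gamma[OF g(1), of "- d"] by (simp add: \<gamma>_def)
  have "\<gamma> \<notin> \<Gamma> (Suc k)"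
  proof
    assume "\<gamma> \<in> \<Gamma> (Suc k)"
    from conj_mem_Gamma[OF this, of d] g(2) show False by (simp add: \<gamma>_def add.assoc)
  qed
  moreover obtain d' where d': "d' \<in> D (Suc k)" "- (d + \<gamma>) + d' \<in> \<Gamma> (Suc k)"
    using D_representative by (auto simp: mem_lcoset_iff)
  ultimately have "d' \<in> J \<Gamma> D (Suc k)" using mem_J_Suc d \<gamma> by blast
  then have "\<eta> d' = alpha r (Suc (Suc k))" by (rule eta_J)
  have "d + (- (d + \<gamma>) + d') \<in> Per \<eta> (\<Gamma> n) (alpha r (Suc k))"
    using J_add_mem_Per_eta[OF d d'(2) \<open>k < n\<close>] .
  then have "d' \<in> lcoset g (Per \<eta> (\<Gamma> n) (alpha r (Suc k)))"
    by (simp add: mem_lcoset_iff \<gamma>_def minus_add add.assoc)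
  with inv have "\<eta> (0 + d') = alpha r (Suc k)" unfolding Per_def using Gamma_zero by blast
  with \<open>\<eta> d' = alpha r (Suc (Suc k))\<close> alpha_Suc_neq[OF r_gt_1] show False by simp
qed

lemma mem_Gamma_if_Per_eta_invariant:
  assumes "\<And>a. a \<in> {1..r} \<Longrightarrow> lcoset g (Per \<eta> (\<Gamma> n) a) = Per \<eta> (\<Gamma> n) a"
  shows "g \<in> \<Gamma> n"
proof -
  have "g \<in> \<Gamma> k" if "k \<le> n" for k
    using that
  proof (induction k)
    case 0
    show ?case by (simp add: Gamma_0)
  next
    case (Suc k)
    then show ?case
      using lcoset_Per_eta_neq assms alpha_range[OF r_gt_1] by (metis Suc_le_lessD Suc_leD)
  qed
  then show ?thesis by simp
qed

section \<open>The factor map to the odometer\<close>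

text \<open>For \<open>x \<in> X\<close>, \<open>aligned x n v\<close> means \<open>\<sigma>\<^sup>v x \<in> C\<^sub>n\<close>.\<close>
definition aligned :: "('g \<Rightarrow> nat) \<Rightarrow> nat \<Rightarrow> 'g \<Rightarrow> bool" where
  "aligned x n v \<longleftrightarrow> (\<forall>a\<in>{1..r}. Per (shift v x) (\<Gamma> n) a = Per \<eta> (\<Gamma> n) a)"

lemma aligned_iff_Per:
  "aligned x n v \<longleftrightarrow> (\<forall>a\<in>{1..r}. Per x (\<Gamma> n) a = lcoset (- v) (Per \<eta> (\<Gamma> n) a))"
proof -
  have "Per (shift v x) (\<Gamma> n) a = P \<longleftrightarrow> Per x (\<Gamma> n) a = lcoset (- v) P" for a P
    using lcoset_cancel_left[of v "Per x (\<Gamma> n) a" "lcoset (- v) P"]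
    by (simp add: Per_shift[OF normal_Gamma])
  then show ?thesis unfolding aligned_def by simp
qed

lemma aligned_mono: "aligned x m v \<Longrightarrow> n \<le> m \<Longrightarrow> aligned x n v"
  unfolding aligned_def
  using Per_eq_subgroup_mono[OF subgroup_Gamma subgroup_Gamma Gamma_antimono] by blast

lemma aligned_shift: "aligned x n v \<Longrightarrow> aligned (shift g x) n (v + - g)"
  unfolding aligned_def by (simp add: add.assoc)

lemma aligned_iff_same_coset:
  assumes "aligned x n v"
  shows "aligned x n w \<longleftrightarrow> lcoset (- w) (\<Gamma> n) = lcoset (- v) (\<Gamma> n)"
proof
  assume "aligned x n w"
  with assms have "lcoset (- v) (Per \<eta> (\<Gamma> n) a) = lcoset (- w) (Per \<eta> (\<Gamma> n) a)"
    if "a \<in> {1..r}" for a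
    using that unfolding aligned_iff_Per by simp
  then have "lcoset w (lcoset (- v) (Per \<eta> (\<Gamma> n) a)) = lcoset w (lcoset (- w) (Per \<eta> (\<Gamma> n) a))"
    if "a \<in> {1..r}" for a
    using that by simp
  then have "lcoset (w + - v) (Per \<eta> (\<Gamma> n) a) = Per \<eta> (\<Gamma> n) a" if "a \<in> {1..r}" for a
    using that by simp
  then have "w + - v \<in> \<Gamma> n" by (rule mem_Gamma_if_Per_eta_invariant)
  then show "lcoset (- w) (\<Gamma> n) = lcoset (- v) (\<Gamma> n)"
    by (simp add: lcoset_eq_iff[OF subgroup_Gamma] minus_add)
next
  assume "lcoset (- w) (\<Gamma> n) = lcoset (- v) (\<Gamma> n)"
  then have "- (w + - v) \<in> \<Gamma> n" by (simp add: lcoset_eq_iff[OF subgroup_Gamma] Gamma_minus)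
  then have vw: "v + - w \<in> \<Gamma> n" by (simp add: minus_add)
  have "lcoset (- w) (Per \<eta> (\<Gamma> n) a) = lcoset (- v) (lcoset (v + - w) (Per \<eta> (\<Gamma> n) a))" for a
    by (simp add: add.assoc[symmetric])
  with assms show "aligned x n w"
    unfolding aligned_iff_Per by (simp add: lcoset_Per[OF subgroup_Gamma vw])
qed

definition factor_map :: "('g \<Rightarrow> nat) \<Rightarrow> nat \<Rightarrow> 'g set" where
  "factor_map x n = lcoset (- (SOME v. aligned x n v)) (\<Gamma> n)"

lemma factor_map_eq: "aligned x n v \<Longrightarrow> factor_map x n = lcoset (- v) (\<Gamma> n)"
  unfolding factor_map_def by (metis aligned_iff_same_coset someI)

lemma factor_map_in_odometer:
  assumes "\<And>n. \<exists>v. aligned x n v"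
  shows "factor_map x \<in> odometer \<Gamma>"
proof -
  have "factor_map x (Suc n) \<subseteq> factor_map x n" for n
  proof -
    obtain v where v: "aligned x (Suc n) v" using assms by blast
    then have "aligned x n v" using aligned_mono by simp
    with v show ?thesis
      by (simp add: factor_map_eq lcoset_mono Gamma_Suc_subset)
  qed
  then show ?thesis unfolding odometer_def by (simp add: factor_map_def)
qed

lemma factor_map_shift:
  assumes "\<And>n. \<exists>v. aligned x n v"
  shows "factor_map (shift g x) = odo_act g (factor_map x)"
proof
  fix n
  obtain v where v: "aligned x n v" using assms by blast
  then show "factor_map (shift g x) n = odo_act g (factor_map x) n"
    using factor_map_eq[OF aligned_shift[OF v]] factor_map_eq[OF v] by (simp add: odo_act_def minus_add)
qed

lemma Cni_apply:
  assumes "c \<in> Cni r \<Gamma> D m j" "1 \<le> m" "v \<in> D m"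
  shows "c v = (if v \<in> Ucum \<Gamma> D m then \<eta> v else j)"
proof (cases "v \<in> Ucum \<Gamma> D m")
  case True
  have "Per c (\<Gamma> m) (\<eta> v) = Per \<eta> (\<Gamma> m) (\<eta> v)"
    using assms(1) Ucum_subset_Per_eta(2)[OF True] unfolding Cni_def Cn_def by blast
  with Ucum_subset_Per_eta(1)[OF True] have "c (0 + v) = \<eta> v"
    unfolding Per_def using Gamma_zero by blast
  with True show ?thesis by simp
next
  case False
  with assms(2,3) have "v \<in> J \<Gamma> D m" by (rule mem_J_if)
  with assms(1) False show ?thesis unfolding Cni_def by simp
qed

end

locale toeplitz_A = toeplitz r \<Gamma> D
  for r and \<Gamma> :: "nat \<Rightarrow> 'g::{group_add,countable} set" and D +
  fixes i :: nat
begin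

lemma mem_A_iff: "x \<in> A r \<Gamma> D i \<longleftrightarrow> (\<forall>g. \<forall>\<^sub>F l in sequentially. shift (- g) x \<in> Z r \<Gamma> D i l)"
  unfolding A_def eventually_sequentially
  by (simp only: INT_iff UN_iff Ball_def bex_UNIV atLeast_iff mem_shift_image_iff UNIV_I simp_thms)

lemma shift_mem_A:
  assumes "x \<in> A r \<Gamma> D i"
  shows "shift h x \<in> A r \<Gamma> D i"
  unfolding mem_A_iff
proof
  fix g
  from assms have "\<forall>\<^sub>F l in sequentially. shift (- (- h + g)) x \<in> Z r \<Gamma> D i l"
    unfolding mem_A_iff by blast
  then show "\<forall>\<^sub>F l in sequentially. shift (- g) (shift h x) \<in> Z r \<Gamma> D i l"
    by (simp add: minus_add)
qed

lemma A_eventually_Cni: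
  assumes "x \<in> A r \<Gamma> D i"
  shows "\<forall>\<^sub>F l in sequentially. \<exists>v\<in>D (i + l * r). shift (v + - g) x \<in> Cni r \<Gamma> D (i + l * r) i"
proof -
  from assms have "\<forall>\<^sub>F l in sequentially. shift (- g) x \<in> Z r \<Gamma> D i l"
    unfolding mem_A_iff by blast
  then show ?thesis
  proof eventually_elim
    case (elim l)
    then obtain v where v: "v \<in> D (i + l * r)" "shift (- g) x \<in> shift (- v) ` Cni r \<Gamma> D (i + l * r) i"
      unfolding Z_def by blast
    from v(2) have "shift (v + - g) x \<in> Cni r \<Gamma> D (i + l * r) i"
      by (simp add: mem_shift_image_iff)
    with v(1) show ?case by blast
  qed
qed

lemma A_eventually_aligned:
  assumes "x \<in> A r \<Gamma> D i"
  shows "\<forall>\<^sub>F l in sequentially. \<exists>v\<in>D (i + l * r). aligned x (i + l * r) (v + - g)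
           \<and> x g = (if v \<in> Ucum \<Gamma> D (i + l * r) then \<eta> v else i)"
  using A_eventually_Cni[OF assms, of g] eventually_ge_at_top[of 1]
proof eventually_elim
  case (elim l)
  then obtain v where v: "v \<in> D (i + l * r)" and c: "shift (v + - g) x \<in> Cni r \<Gamma> D (i + l * r) i"
    by blast
  have "1 \<le> i + l * r" using elim(2) r_gt_1 by (simp add: Suc_le_eq)
  from Cni_apply[OF c this v] have "x g = (if v \<in> Ucum \<Gamma> D (i + l * r) then \<eta> v else i)"
    by (simp add: shift_def minus_add add.assoc)
  moreover have "aligned x (i + l * r) (v + - g)"
    using c unfolding Cni_def Cn_def aligned_def by blast
  ultimately show ?case using v by blast
qed

lemma A_aligned:
  assumes "x \<in> A r \<Gamma> D i"
  shows "\<exists>v. aligned x n v"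
proof -
  obtain l where l: "l \<ge> n" "\<exists>v. aligned x (i + l * r) v"
    using eventually_conj[OF A_eventually_aligned[OF assms, of 0] eventually_ge_at_top[of n]]
    unfolding eventually_sequentially by blast
  have "l \<le> l * r" using r_gt_1 by simp
  with l(1) have "n \<le> i + l * r" by linarith
  with l(2) show ?thesis using aligned_mono by blast
qed

definition coset_symbol :: "nat \<Rightarrow> 'g set \<Rightarrow> 'g \<Rightarrow> nat" where
  "coset_symbol m C h =
     (let v = THE v. v \<in> D m \<and> lcoset (h + - v) (\<Gamma> m) = C in if v \<in> Ucum \<Gamma> D m then \<eta> v else i)"

lemma coset_symbol_eq:
  assumes "v \<in> D m"
  shows "coset_symbol m (lcoset (h + - v) (\<Gamma> m)) h = (if v \<in> Ucum \<Gamma> D m then \<eta> v else i)"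
proof -
  have "(THE v'. v' \<in> D m \<and> lcoset (h + - v') (\<Gamma> m) = lcoset (h + - v) (\<Gamma> m)) = v"
  proof (rule the_equality)
    fix w assume w: "w \<in> D m \<and> lcoset (h + - w) (\<Gamma> m) = lcoset (h + - v) (\<Gamma> m)"
    then have "w + - v \<in> \<Gamma> m"
      by (simp add: lcoset_eq_iff[OF subgroup_Gamma] minus_add add.assoc)
    from conj_mem_Gamma[OF this, of "- v"] have "- v + w \<in> \<Gamma> m" by (simp add: add.assoc)
    from D_representative_unique[OF assms conjunct1[OF w] this] show "w = v" by simp
  qed (use assms in simp)
  then show ?thesis unfolding coset_symbol_def by simp
qed

lemma A_eventually_coset_symbol:
  assumes "x \<in> A r \<Gamma> D i"
  shows "\<forall>\<^sub>F l in sequentially. coset_symbol (i + l * r) (factor_map x (i + l * r)) h = x h"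
  using A_eventually_aligned[OF assms, of h]
proof eventually_elim
  case (elim l)
  then obtain v where "v \<in> D (i + l * r)" "aligned x (i + l * r) (v + - h)"
    "x h = (if v \<in> Ucum \<Gamma> D (i + l * r) then \<eta> v else i)" by blast
  then show ?case using factor_map_eq coset_symbol_eq by (simp add: minus_add)
qed

definition decode :: "(nat \<Rightarrow> 'g set) \<Rightarrow> 'g \<Rightarrow> nat" where
  "decode y h = lim (\<lambda>l. coset_symbol (i + l * r) (y (i + l * r)) h)"

lemma decode_factor_map: "x \<in> A r \<Gamma> D i \<Longrightarrow> decode (factor_map x) = x"
  unfolding decode_def
  by (intro ext limI) (simp add: tendsto_discrete A_eventually_coset_symbol)

lemma inj_on_factor_map: "inj_on factor_map (A r \<Gamma> D i)"
  by (metis decode_factor_map inj_onI)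

lemma factor_map_A_in_odometer: "x \<in> A r \<Gamma> D i \<Longrightarrow> factor_map x \<in> odometer \<Gamma>"
  using factor_map_in_odometer A_aligned by blast

lemma factor_map_A_shift: "x \<in> A r \<Gamma> D i \<Longrightarrow> factor_map (shift g x) = odo_act g (factor_map x)"
  using factor_map_shift A_aligned by blast

end

section \<open>Measurability and the measure conjugacy\<close>

lemma measurable_lim_discrete:
  fixes f :: "nat \<Rightarrow> 'a \<Rightarrow> 'b::{discrete_topology, countable}"
  assumes [measurable]: "\<And>l. f l \<in> measurable M (count_space UNIV)"
  shows "(\<lambda>y. lim (\<lambda>l. f l y)) \<in> measurable M (count_space UNIV)"
  unfolding measurable_count_space_eq2_countable
proof (intro conjI ballI)
  fix b :: 'b
  have lim_eq: "lim (\<lambda>l. f l y) = b \<longleftrightarrow> (\<forall>\<^sub>F l in sequentially. f l y = b)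
      \<or> (\<not> (\<exists>c. \<forall>\<^sub>F l in sequentially. f l y = c) \<and> (THE c. False) = b)" for y
  proof (cases "\<exists>c. \<forall>\<^sub>F l in sequentially. f l y = c")
    case True
    then obtain c where c: "\<forall>\<^sub>F l in sequentially. f l y = c" by blast
    then have "lim (\<lambda>l. f l y) = c" by (simp add: limI tendsto_discrete)
    moreover have "(\<forall>\<^sub>F l in sequentially. f l y = b) \<longleftrightarrow> c = b"
    proof
      assume "\<forall>\<^sub>F l in sequentially. f l y = b"
      with c have "\<forall>\<^sub>F l in sequentially. c = b" by eventually_elim simp
      then show "c = b" by simp
    qed (use c in simp)
    ultimately show ?thesis using True by blast
  next
    case False
    then have "lim (\<lambda>l. f l y) = (THE c. False)" by (simp add: lim_def tendsto_discrete)
    with False show ?thesis by auto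
  qed
  have "(\<lambda>y. lim (\<lambda>l. f l y)) -` {b} \<inter> space M = {y \<in> space M. (\<forall>\<^sub>F l in sequentially. f l y = b)
      \<or> (\<not> (\<exists>c. \<forall>\<^sub>F l in sequentially. f l y = c) \<and> (THE c. False) = b)}"
    using lim_eq by blast
  also have "\<dots> \<in> sets M" by measurable
  finally show "(\<lambda>y. lim (\<lambda>l. f l y)) -` {b} \<inter> space M \<in> sets M" .
qed simp

lemma sets_Collect_eq_count_space:
  assumes "f \<in> measurable M (count_space Q)" "g \<in> measurable M (count_space Q)" "countable Q"
  shows "{x \<in> space M. f x = g x} \<in> sets M"
proof -
  have "{x \<in> space M. f x = g x} = (\<Union>C\<in>Q. (f -` {C} \<inter> space M) \<inter> (g -` {C} \<inter> space M))"
    using measurable_space[OF assms(1)] measurable_space[OF assms(2)] by auto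
  also have "\<dots> \<in> sets M"
    using assms measurable_sets by (intro sets.countable_UN') auto
  finally show ?thesis .
qed

lemma sets_borel_Per_eq: "{x :: 'g::{group_add,countable} \<Rightarrow> nat. \<forall>a\<in>T. Per x H a = S a} \<in> sets borel"
  unfolding Per_def set_eq_iff mem_Collect_eq by measurable

context toeplitz
begin

lemma sets_borel_aligned: "{x. aligned x n v} \<in> sets borel"
  unfolding aligned_iff_Per by (rule sets_borel_Per_eq)

end

locale toeplitz_measure = toeplitz_A r \<Gamma> D i
  for r and \<Gamma> :: "nat \<Rightarrow> 'g::{group_add,countable} set" and D i +
  fixes \<mu> :: "('g \<Rightarrow> nat) measure"
  assumes sets_mu: "sets \<mu> = sets (restrict_space borel (Xsh r \<Gamma> D))"
    and space_mu: "space \<mu> = Xsh r \<Gamma> D"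
    and invariant_mu: "invariant_prob shift \<mu>"
    and A_full: "emeasure \<mu> (A r \<Gamma> D i) = 1"
begin

abbreviation \<mu>\<^sub>A :: "('g \<Rightarrow> nat) measure" where
  "\<mu>\<^sub>A \<equiv> restrict_space \<mu> (A r \<Gamma> D i)"

lemma sets_A: "A r \<Gamma> D i \<in> sets \<mu>"
  using A_full emeasure_notin_sets by force

lemma A_subset_space: "A r \<Gamma> D i \<subseteq> space \<mu>"
  using sets.sets_into_space[OF sets_A] .

lemma space_mu_A [simp]: "space \<mu>\<^sub>A = A r \<Gamma> D i"
  using A_subset_space by (simp add: space_restrict_space Int_absorb2)

lemma sets_borel_Xsh: "Xsh r \<Gamma> D \<in> sets borel"
  unfolding Xsh_def by (rule borel_closed) simp

lemma Int_borel_in_sets_mu_A: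
  assumes "B \<in> sets borel"
  shows "A r \<Gamma> D i \<inter> B \<in> sets \<mu>\<^sub>A"
proof -
  have "A r \<Gamma> D i \<in> sets borel"
    using sets_A sets_mu sets_borel_Xsh by (simp add: sets_restrict_space_iff)
  with assms have "A r \<Gamma> D i \<inter> B \<in> sets \<mu>"
    using A_subset_space sets_borel_Xsh sets_mu space_mu by (auto simp: sets_restrict_space_iff)
  then show ?thesis using sets_A by (simp add: sets_restrict_space_iff)
qed

lemma measurable_factor_map: "factor_map \<in> measurable \<mu>\<^sub>A (odometer_space \<Gamma>)"
proof (rule measurable_into_odometer_space)
  fix n
  show "(\<lambda>x. factor_map x n) \<in> measurable \<mu>\<^sub>A (count_space (quot (\<Gamma> n)))"
    unfolding measurable_count_space_eq2[OF finite_quot_Gamma]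
  proof (intro conjI ballI)
    show "(\<lambda>x. factor_map x n) \<in> space \<mu>\<^sub>A \<rightarrow> quot (\<Gamma> n)"
      using factor_map_A_in_odometer unfolding odometer_def by auto
    fix C assume "C \<in> quot (\<Gamma> n)"
    then obtain a where a: "C = lcoset a (\<Gamma> n)" unfolding quot_def by blast
    have "(\<lambda>x. factor_map x n) -` {C} \<inter> space \<mu>\<^sub>A = A r \<Gamma> D i \<inter> {x. aligned x n (- a)}"
    proof (intro set_eqI iffI)
      fix x assume x: "x \<in> (\<lambda>x. factor_map x n) -` {C} \<inter> space \<mu>\<^sub>A"
      then obtain v where v: "aligned x n v" using A_aligned by auto
      with x a show "x \<in> A r \<Gamma> D i \<inter> {x. aligned x n (- a)}"
        using factor_map_eq aligned_iff_same_coset by auto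
    qed (use a factor_map_eq in auto)
    then show "(\<lambda>x. factor_map x n) -` {C} \<inter> space \<mu>\<^sub>A \<in> sets \<mu>\<^sub>A"
      using Int_borel_in_sets_mu_A[OF sets_borel_aligned] by simp
  qed
qed (use factor_map_A_in_odometer in auto)

lemma measurable_decode: "decode \<in> borel_measurable (odometer_space \<Gamma>)"
proof (rule measurable_coordinatewise_then_product)
  fix h
  have "(\<lambda>y. coset_symbol m (y m) h) \<in> measurable (odometer_space \<Gamma>) (count_space UNIV)" for m
    using measurable_compose[OF measurable_odometer_coord, of "\<lambda>C. coset_symbol m C h"] by simp
  then have "(\<lambda>y. decode y h) \<in> measurable (odometer_space \<Gamma>) (count_space UNIV)"
    unfolding decode_def by (rule measurable_lim_discrete)
  then show "(\<lambda>y. decode y h) \<in> borel_measurable (odometer_space \<Gamma>)"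
    using measurable_cong_sets[OF refl sets_borel_eq_count_space] by blast
qed

definition pushforward :: "(nat \<Rightarrow> 'g set) measure" where
  "pushforward = distr \<mu>\<^sub>A (odometer_space \<Gamma>) factor_map"

lemma sets_pushforward [simp]: "sets pushforward = sets (odometer_space \<Gamma>)"
  and space_pushforward [simp]: "space pushforward = odometer \<Gamma>"
  unfolding pushforward_def by simp_all

lemma emeasure_pushforward:
  "B \<in> sets (odometer_space \<Gamma>) \<Longrightarrow> emeasure pushforward B = emeasure \<mu> (factor_map -` B \<inter> A r \<Gamma> D i)"
  unfolding pushforward_def
  by (simp add: emeasure_distr[OF measurable_factor_map] emeasure_restrict_space sets_A
      Int_absorb2 A_subset_space)

lemma sets_factor_map_vimage:
  "B \<in> sets (odometer_space \<Gamma>) \<Longrightarrow> factor_map -` B \<inter> A r \<Gamma> D i \<in> sets \<mu>"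
  using measurable_sets[OF measurable_factor_map] sets_A by (simp add: sets_restrict_space_iff)

lemma invariant_prob_pushforward: "invariant_prob odo_act pushforward"
  unfolding invariant_prob_def
proof (intro conjI allI ballI)
  have "prob_space \<mu>\<^sub>A"
    using A_full sets_A by (intro prob_spaceI) (simp add: emeasure_restrict_space)
  then show "prob_space pushforward"
    unfolding pushforward_def by (rule prob_space.prob_space_distr[OF _ measurable_factor_map])
  fix g
  show "odo_act g \<in> measurable pushforward pushforward"
    using measurable_odo_act by (simp cong: measurable_cong_sets)
  fix B assume "B \<in> sets pushforward"
  then have B: "B \<in> sets (odometer_space \<Gamma>)" by simp
  have pre: "odo_act g -` B \<inter> odometer \<Gamma> \<in> sets (odometer_space \<Gamma>)"
    using measurable_sets[OF measurable_odo_act B] by simp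
  have "emeasure pushforward (odo_act g -` B \<inter> space pushforward)
      = emeasure \<mu> (factor_map -` (odo_act g -` B \<inter> odometer \<Gamma>) \<inter> A r \<Gamma> D i)"
    by (simp add: emeasure_pushforward[OF pre])
  also have "factor_map -` (odo_act g -` B \<inter> odometer \<Gamma>) \<inter> A r \<Gamma> D i
      = shift g -` (factor_map -` B \<inter> A r \<Gamma> D i) \<inter> space \<mu>"
  proof (intro set_eqI iffI)
    fix x assume "x \<in> factor_map -` (odo_act g -` B \<inter> odometer \<Gamma>) \<inter> A r \<Gamma> D i"
    then show "x \<in> shift g -` (factor_map -` B \<inter> A r \<Gamma> D i) \<inter> space \<mu>"
      using shift_mem_A factor_map_A_shift A_subset_space by auto
  next
    fix x assume x: "x \<in> shift g -` (factor_map -` B \<inter> A r \<Gamma> D i) \<inter> space \<mu>"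
    then have "x \<in> A r \<Gamma> D i" using shift_mem_A[of "shift g x" "- g"] by simp
    with x show "x \<in> factor_map -` (odo_act g -` B \<inter> odometer \<Gamma>) \<inter> A r \<Gamma> D i"
      using factor_map_A_shift factor_map_A_in_odometer by auto
  qed
  also have "emeasure \<mu> \<dots> = emeasure \<mu> (factor_map -` B \<inter> A r \<Gamma> D i)"
    using invariant_mu sets_factor_map_vimage[OF B] unfolding invariant_prob_def by blast
  also have "\<dots> = emeasure pushforward B" by (simp add: emeasure_pushforward[OF B])
  finally show "emeasure pushforward (odo_act g -` B \<inter> space pushforward) = emeasure pushforward B" .
qed

text \<open>The image of \<open>A\<^sub>i\<close> is measurable because \<open>decode\<close> is a measurable left inverse.\<close>
lemma sets_factor_map_image: "factor_map ` A r \<Gamma> D i \<in> sets (odometer_space \<Gamma>)"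
proof -
  define W where "W = decode -` A r \<Gamma> D i \<inter> odometer \<Gamma>"
  have "A r \<Gamma> D i \<in> sets borel"
    using sets_A sets_mu sets_borel_Xsh by (simp add: sets_restrict_space_iff)
  then have W: "W \<in> sets (odometer_space \<Gamma>)"
    using measurable_sets[OF measurable_decode] unfolding W_def by simp
  let ?W = "restrict_space (odometer_space \<Gamma>) W"
  have space_W: "space ?W = W" using W by (simp add: space_restrict_space W_def)
  have "decode \<in> measurable ?W \<mu>\<^sub>A"
  proof (rule measurable_restrict_space2)
    show "decode \<in> space ?W \<rightarrow> A r \<Gamma> D i" using space_W unfolding W_def by auto
    have "decode \<in> measurable ?W (restrict_space borel (Xsh r \<Gamma> D))"
      using A_subset_space space_mu unfolding W_def
      by (intro measurable_restrict_space3[OF measurable_decode]) auto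
    then show "decode \<in> measurable ?W \<mu>" by (simp cong: measurable_cong_sets add: sets_mu)
  qed
  then have "(\<lambda>y. factor_map (decode y)) \<in> measurable ?W (odometer_space \<Gamma>)"
    using measurable_factor_map by (rule measurable_compose)
  then have "(\<lambda>y. factor_map (decode y) n) \<in> measurable ?W (count_space (quot (\<Gamma> n)))" for n
    using measurable_odometer_coord by (rule measurable_compose)
  then have "{y \<in> space ?W. factor_map (decode y) n = y n} \<in> sets ?W" for n
    using measurable_restrict_space1[OF measurable_odometer_coord] finite_quot_Gamma
    by (intro sets_Collect_eq_count_space) (auto intro: countable_finite)
  then have "{y \<in> space ?W. \<forall>n. factor_map (decode y) n = y n} \<in> sets ?W"
    by (rule sets.sets_Collect_countable_All)
  moreover have "{y \<in> space ?W. \<forall>n. factor_map (decode y) n = y n} = factor_map ` A r \<Gamma> D i"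
  proof (intro set_eqI iffI)
    fix y assume "y \<in> {y \<in> space ?W. \<forall>n. factor_map (decode y) n = y n}"
    then have "y = factor_map (decode y)" "decode y \<in> A r \<Gamma> D i"
      using space_W unfolding W_def by auto
    then show "y \<in> factor_map ` A r \<Gamma> D i" by blast
  qed (use space_W decode_factor_map factor_map_A_in_odometer in \<open>auto simp: W_def\<close>)
  ultimately have "factor_map ` A r \<Gamma> D i \<in> sets ?W" by simp
  moreover have "W \<inter> space (odometer_space \<Gamma>) \<in> sets (odometer_space \<Gamma>)"
    using W by (simp add: W_def Int_assoc)
  ultimately show ?thesis using sets_restrict_space_iff by blast
qed

lemma meas_conj_pushforward: "meas_conj shift \<mu> odo_act pushforward"
  unfolding meas_conj_def
proof (intro exI conjI)
  let ?Y = "factor_map ` A r \<Gamma> D i"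
  show "A r \<Gamma> D i \<in> sets \<mu>" by (rule sets_A)
  show "?Y \<in> sets pushforward" using sets_factor_map_image by simp
  have "prob_space \<mu>" using invariant_mu unfolding invariant_prob_def by blast
  moreover have "emeasure \<mu> (space \<mu> - A r \<Gamma> D i) = emeasure \<mu> (space \<mu>) - emeasure \<mu> (A r \<Gamma> D i)"
    using A_full by (intro emeasure_compl[OF sets_A]) simp
  ultimately show "emeasure \<mu> (space \<mu> - A r \<Gamma> D i) = 0"
    using A_full by (simp add: prob_space.emeasure_space_1)
  have "odometer \<Gamma> - ?Y \<in> sets (odometer_space \<Gamma>)"
    using sets.compl_sets[OF sets_factor_map_image] by simp
  moreover have "factor_map -` (odometer \<Gamma> - ?Y) \<inter> A r \<Gamma> D i = {}" by auto
  ultimately show "emeasure pushforward (space pushforward - ?Y) = 0"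
    by (simp add: emeasure_pushforward)
  show "\<forall>g. \<forall>x\<in>A r \<Gamma> D i. shift g x \<in> A r \<Gamma> D i" using shift_mem_A by blast
  show "\<forall>g. \<forall>y\<in>?Y. odo_act g y \<in> ?Y"
  proof (intro allI ballI)
    fix g y assume "y \<in> ?Y"
    then obtain x where x: "x \<in> A r \<Gamma> D i" "y = factor_map x" by blast
    then have "odo_act g y = factor_map (shift g x)" using factor_map_A_shift by simp
    moreover have "shift g x \<in> A r \<Gamma> D i" using shift_mem_A x(1) by blast
    ultimately show "odo_act g y \<in> ?Y" by blast
  qed
  show "bij_betw factor_map (A r \<Gamma> D i) ?Y" using inj_on_factor_map by (simp add: bij_betw_def)
  have "factor_map \<in> measurable \<mu>\<^sub>A pushforward"
    using measurable_factor_map by (simp cong: measurable_cong_sets)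
  then show "factor_map \<in> measurable \<mu>\<^sub>A (restrict_space pushforward ?Y)"
    by (intro measurable_restrict_space2) auto
  have decode: "decode \<in> measurable (restrict_space pushforward ?Y) \<mu>\<^sub>A"
  proof (rule measurable_restrict_space2)
    show "decode \<in> space (restrict_space pushforward ?Y) \<rightarrow> A r \<Gamma> D i"
      using decode_factor_map by (auto simp: space_restrict_space)
    have "decode \<in> measurable (restrict_space (odometer_space \<Gamma>) ?Y) (restrict_space borel (Xsh r \<Gamma> D))"
      using A_subset_space space_mu decode_factor_map
      by (intro measurable_restrict_space3[OF measurable_decode]) auto
    then show "decode \<in> measurable (restrict_space pushforward ?Y) \<mu>"
      using measurable_cong_sets[OF sets_restrict_space_cong[OF sets_pushforward] sets_mu] by simp
  qed
  have decode_eq: "decode y = the_inv_into (A r \<Gamma> D i) factor_map y"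
    if "y \<in> space (restrict_space pushforward ?Y)" for y
    using that decode_factor_map the_inv_into_f_f[OF inj_on_factor_map]
    by (auto simp: space_restrict_space)
  show "the_inv_into (A r \<Gamma> D i) factor_map \<in> measurable (restrict_space pushforward ?Y) \<mu>\<^sub>A"
    using measurable_cong[THEN iffD1, OF decode_eq decode] .
  show "\<forall>g. \<forall>x\<in>A r \<Gamma> D i. factor_map (shift g x) = odo_act g (factor_map x)"
    using factor_map_A_shift by blast
  show "\<forall>B\<in>sets pushforward. B \<subseteq> ?Y \<longrightarrow> emeasure pushforward B = emeasure \<mu> (factor_map -` B \<inter> A r \<Gamma> D i)"
    by (simp add: emeasure_pushforward)
qed

end

theorem proposition5p8:
  fixes r :: nat and \<Gamma> D :: "nat \<Rightarrow> 'g::{group_add,countable} set"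
    and \<mu> :: "('g \<Rightarrow> nat) measure" and i :: nat
  assumes "toeplitz_setting r \<Gamma> D"
    and "sets \<mu> = sets (restrict_space borel (Xsh r \<Gamma> D))"
    and "space \<mu> = Xsh r \<Gamma> D"
    and "invariant_prob shift \<mu>"
    and "1 \<le> i" and "i \<le> r"
    and "emeasure \<mu> (A r \<Gamma> D i) = 1"
  shows "(\<exists>\<nu>. sets \<nu> = sets (odometer_space \<Gamma>) \<and> space \<nu> = odometer \<Gamma> \<and> invariant_prob odo_act \<nu>)
    \<and> (\<forall>\<nu>. sets \<nu> = sets (odometer_space \<Gamma>) \<and> space \<nu> = odometer \<Gamma> \<and> invariant_prob odo_act \<nu>
           \<longrightarrow> meas_conj shift \<mu> odo_act \<nu>)"
proof -
  interpret toeplitz_measure r \<Gamma> D i \<mu>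
    using assms(1-4,7) by unfold_locales
  show ?thesis
  proof (intro conjI allI impI)
    show "\<exists>\<nu>. sets \<nu> = sets (odometer_space \<Gamma>) \<and> space \<nu> = odometer \<Gamma> \<and> invariant_prob odo_act \<nu>"
      using invariant_prob_pushforward by (intro exI[of _ pushforward]) simp
    fix \<nu>
    assume "sets \<nu> = sets (odometer_space \<Gamma>) \<and> space \<nu> = odometer \<Gamma> \<and> invariant_prob odo_act \<nu>"
    then have "\<nu> = pushforward"
      using invariant_prob_pushforward by (intro invariant_odometer_measure_unique) simp_all
    with meas_conj_pushforward show "meas_conj shift \<mu> odo_act \<nu>" by simp
  qed
qed

end
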